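(* For $A,x\in\mathbb{R}$ define $E_0(A,x):=1$, $E_1(A,x):=e^{(1-x)A}$ and, for $n\ge2$, \[ E_n(A,x):=\begin{cases} \exp\!\Big(\big[x(E_1+E_3+\cdots+E_{n-1})-\tfrac n2\big]A\Big), & n \text{ even},\\[4pt] \exp\!\Big(\big[\tfrac{n+1}{2}-x(E_0+E_2+\cdots+E_{n-1})\big]A\Big), & n\text{ odd},\end{cases} \] with all $E_j$ evaluated at $(A,x)$. Define $\varphi_1(A,x):=x-1$, $\varphi_n(A,x):=\varphi_{n-1}(A,x)-1+xE_{n-1}(A,x)$ for $n\ge2$, and the polynomial $p_n(A):=\frac{\partial\varphi_n}{\partial x}(A,1)$. Then for every $n\ge1$, the polynomials $\frac{p_{2n}(A)}{2-A}$ and $p_{2n+1}(A)$ are even functions of $A$.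
   Context: For every $n\ge1$, $2-A$ divides $p_{2n}(A)$, so $\frac{p_{2n}(A)}{2-A}$ is a polynomial. *)

theory Defs
  imports "HOL-Analysis.Analysis" "HOL-Computational_Algebra.Polynomial"
begin

function E :: "nat \<Rightarrow> real \<Rightarrow> real \<Rightarrow> real" where
  "E n A x =
     (if n = 0 then 1
      else if n = 1 then exp ((1 - x) * A)
      else if even n then exp ((x * (\<Sum>j | j < n \<and> odd j. E j A x) - real n / 2) * A)
      else exp ((real (n + 1) / 2 - x * (\<Sum>j | j < n \<and> even j. E j A x)) * A))"
  by pat_completeness auto
termination
  by (relation "Wellfounded.measure (\<lambda>(n, A, x). n)") auto

text \<open>phi n A x = varphi_n(A,x) for n >= 1 (the value at n = 0 is an unused dummy).\<close>
fun phi :: "nat \<Rightarrow> real \<Rightarrow> real \<Rightarrow> real" where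
  "phi 0 A x = 0"
| "phi (Suc 0) A x = x - 1"
| "phi (Suc (Suc m)) A x = phi (Suc m) A x - 1 + x * E (Suc m) A x"

definition p :: "nat \<Rightarrow> real \<Rightarrow> real" where
  "p n A = deriv (\<lambda>x. phi n A x) 1"

end

theory Submission
  imports Defs
begin

(* At x = 1 the sums inside the exponents of E_n count the odd (resp. even) indices below n,
   so every E_n(A,1) equals 1. Differentiating in x at 1, the derivatives d_n satisfy
   d_(2k) = A X_k and d_(2k+1) = -A Y_k, where X_0 = 0, Y_0 = 1,
   X_(k+1) = X_k + 1 - A Y_k and Y_(k+1) = Y_k + 1 + A X_(k+1); moreover
   p_(2k+1) = X_k + Y_k and p_(2k+2) = X_(k+1) + Y_k. Both of these sequences satisfy the
   Chebyshev-type recurrence u_(k+2) = (2 - A^2) u_(k+1) - u_k, whose coefficient is even in A.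
   With the initial values 1, 3 - A^2 and 2 - A, (2 - A)(2 - A^2) this gives the claim. *)

declare E.simps[simp del]

lemma E_eq_even:
  "even n \<Longrightarrow> E n A x = exp ((x * (\<Sum>j | j < n \<and> odd j. E j A x) - real n / 2) * A)"
  by (subst E.simps) auto

lemma E_eq_odd:
  "odd n \<Longrightarrow> E n A x = exp ((real (n + 1) / 2 - x * (\<Sum>j | j < n \<and> even j. E j A x)) * A)"
proof (cases "n = 1")
  case True
  have "{j. j < n \<and> even j} = {0}" using True by auto
  then show ?thesis using True by (subst E.simps) (simp add: E_eq_even[of 0])
qed (subst E.simps, auto)

lemma sum_filter_lessThan_Suc:
  fixes f :: "nat \<Rightarrow> 'a::comm_monoid_add"
  shows "(\<Sum>j | j < Suc n \<and> P j. f j) = (\<Sum>j | j < n \<and> P j. f j) + (if P n then f n else 0)"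
proof -
  have "{j. j < Suc n \<and> P j}
      = (if P n then insert n {j. j < n \<and> P j} else {j. j < n \<and> P j})"
    by (auto simp: less_Suc_eq)
  then show ?thesis by (simp add: add.commute)
qed

lemma card_odd_less: "card {j. j < n \<and> odd j} = n div 2"
proof (induction n)
  case (Suc n)
  have "{j. j < Suc n \<and> odd j}
      = (if odd n then insert n {j. j < n \<and> odd j} else {j. j < n \<and> odd j})"
    by (auto simp: less_Suc_eq)
  with Suc show ?case by (auto elim: evenE oddE)
qed simp

lemma card_even_less: "card {j. j < n \<and> even j} = (n + 1) div 2"
proof (induction n)
  case (Suc n)
  have "{j. j < Suc n \<and> even j}
      = (if even n then insert n {j. j < n \<and> even j} else {j. j < n \<and> even j})"
    by (auto simp: less_Suc_eq)
  with Suc show ?case by (auto elim: evenE oddE)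
qed simp

function dE :: "nat \<Rightarrow> real \<Rightarrow> real" where
  "dE n A = (if even n then A * (real n / 2 + (\<Sum>j | j < n \<and> odd j. dE j A))
             else - A * (real (n + 1) / 2 + (\<Sum>j | j < n \<and> even j. dE j A)))"
  by pat_completeness auto
termination
  by (relation "Wellfounded.measure (\<lambda>(n, A). n)") auto

declare dE.simps[simp del]

lemma exp_has_derivative_at_1:
  assumes "(S has_real_derivative S') (at 1)"
  shows "((\<lambda>x. exp ((x * S x - S 1) * B)) has_real_derivative (S 1 + S') * B) (at 1)"
  using assms by (auto intro!: derivative_eq_intros)

lemma E_at_1_and_has_derivative:
  "E n A 1 = 1 \<and> ((\<lambda>x. E n A x) has_real_derivative dE n A) (at 1)"
proof (induction n rule: less_induct)
  case (less n)
  have sum_E: "(\<Sum>j | j < n \<and> P j. E j A 1) = real (card {j. j < n \<and> P j})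
      \<and> ((\<lambda>x. \<Sum>j | j < n \<and> P j. E j A x)
            has_real_derivative (\<Sum>j | j < n \<and> P j. dE j A)) (at 1)"
    for P
    using less.IH by (auto intro!: DERIV_sum)
  show ?case
  proof (cases "even n")
    case True
    define S where "S x = (\<Sum>j | j < n \<and> odd j. E j A x)" for x
    have S_1: "S 1 = real n / 2"
      using sum_E[of odd] True by (auto simp: S_def card_odd_less elim!: evenE)
    have E_n: "E n A x = exp ((x * S x - S 1) * A)" for x
      using True S_1 by (simp add: S_def[symmetric] E_eq_even)
    have "(S has_real_derivative (\<Sum>j | j < n \<and> odd j. dE j A)) (at 1)"
      using sum_E[of odd] by (simp add: S_def[abs_def])
    moreover have "dE n A = (S 1 + (\<Sum>j | j < n \<and> odd j. dE j A)) * A"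
      using True S_1 by (simp add: dE.simps[of n] algebra_simps)
    ultimately show ?thesis
      using exp_has_derivative_at_1 by (simp add: E_n)
  next
    case False
    define S where "S x = (\<Sum>j | j < n \<and> even j. E j A x)" for x
    have S_1: "S 1 = real (n + 1) / 2"
      using sum_E[of even] False by (auto simp: S_def card_even_less elim!: oddE)
    have E_n: "E n A x = exp ((x * S x - S 1) * - A)" for x
      using False S_1 by (simp add: S_def[symmetric] E_eq_odd algebra_simps)
    have "(S has_real_derivative (\<Sum>j | j < n \<and> even j. dE j A)) (at 1)"
      using sum_E[of even] by (simp add: S_def[abs_def])
    moreover have "dE n A = (S 1 + (\<Sum>j | j < n \<and> even j. dE j A)) * - A"
      using False S_1 by (simp add: dE.simps[of n] algebra_simps)
    ultimately show ?thesis
      using exp_has_derivative_at_1[where B = "- A"] by (simp add: E_n)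
  qed
qed

lemma phi_Suc_Suc_has_derivative_at_1:
  assumes "((\<lambda>x. phi (Suc m) A x) has_real_derivative D) (at 1)"
  shows "((\<lambda>x. phi (Suc (Suc m)) A x) has_real_derivative D + 1 + dE (Suc m) A) (at 1)"
proof -
  have "E (Suc m) A 1 = 1" and "((\<lambda>x. E (Suc m) A x) has_real_derivative dE (Suc m) A) (at 1)"
    using E_at_1_and_has_derivative by auto
  then show ?thesis
    using assms by (auto intro!: derivative_eq_intros)
qed

lemma p_1: "p 1 A = 1"
proof -
  have "((\<lambda>x. phi 1 A x) has_real_derivative 1) (at 1)"
    by (auto intro!: derivative_eq_intros)
  then show ?thesis unfolding p_def by (rule DERIV_imp_deriv)
qed

lemma phi_has_derivative_at_1: "((\<lambda>x. phi (Suc m) A x) has_real_derivative p (Suc m) A) (at 1)"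
proof (induction m)
  case 0
  show ?case using p_1 by (auto intro!: derivative_eq_intros)
next
  case (Suc m)
  have "((\<lambda>x. phi (Suc (Suc m)) A x) has_real_derivative p (Suc m) A + 1 + dE (Suc m) A) (at 1)"
    using phi_Suc_Suc_has_derivative_at_1[OF Suc.IH] .
  moreover from this have "p (Suc (Suc m)) A = p (Suc m) A + 1 + dE (Suc m) A"
    unfolding p_def by (rule DERIV_imp_deriv)
  ultimately show ?case by simp
qed

lemma p_Suc_Suc: "p (Suc (Suc m)) A = p (Suc m) A + 1 + dE (Suc m) A"
  using phi_Suc_Suc_has_derivative_at_1[OF phi_has_derivative_at_1, THEN DERIV_imp_deriv]
  by (simp add: p_def)

definition X :: "nat \<Rightarrow> real \<Rightarrow> real" where
  "X k A = real k + (\<Sum>j | j < 2 * k \<and> odd j. dE j A)"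

definition Y :: "nat \<Rightarrow> real \<Rightarrow> real" where
  "Y k A = real k + 1 + (\<Sum>j | j < 2 * k + 1 \<and> even j. dE j A)"

lemma dE_even: "dE (2 * k) A = A * X k A"
  by (subst dE.simps) (simp add: X_def)

lemma dE_odd: "dE (Suc (2 * k)) A = - A * Y k A"
  by (subst dE.simps) (simp add: Y_def field_simps)

lemma X_0: "X 0 A = 0"
  by (simp add: X_def)

lemma Y_0: "Y 0 A = 1"
proof -
  have "{j. j < Suc 0 \<and> even j} = {0}" by auto
  then show ?thesis by (simp add: Y_def dE.simps[of 0])
qed

lemma X_Suc: "X (Suc k) A = X k A + 1 - A * Y k A"
  by (simp add: X_def sum_filter_lessThan_Suc dE_odd)

lemma Y_Suc: "Y (Suc k) A = Y k A + 1 + A * X (Suc k) A"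
  using dE_even[of "Suc k" A] by (simp add: Y_def sum_filter_lessThan_Suc)

lemma p_odd_and_even: "p (2 * k + 1) A = X k A + Y k A \<and> p (2 * k + 2) A = X (Suc k) A + Y k A"
proof (induction k)
  case 0
  show ?case using p_Suc_Suc[of 0 A] p_1 dE_odd[of 0 A] by (simp add: X_0 Y_0 X_Suc)
next
  case (Suc k)
  have "p (2 * Suc k + 1) A = p (2 * k + 2) A + 1 + dE (2 * Suc k) A"
    using p_Suc_Suc[of "2 * k + 1" A] by simp
  moreover have "p (2 * Suc k + 2) A = p (2 * Suc k + 1) A + 1 + dE (Suc (2 * Suc k)) A"
    using p_Suc_Suc[of "2 * Suc k" A] by simp
  ultimately show ?case
    using Suc.IH by (simp only: dE_even dE_odd Y_Suc[of k] X_Suc[of "Suc k"]) simp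
qed

lemma X_plus_Y_recurrence:
  "X (Suc (Suc k)) A + Y (Suc (Suc k)) A = (2 - A\<^sup>2) * (X (Suc k) A + Y (Suc k) A) - (X k A + Y k A)"
  by (simp add: X_Suc Y_Suc algebra_simps power2_eq_square)

lemma X_Suc_plus_Y_recurrence:
  "X (Suc (Suc (Suc k))) A + Y (Suc (Suc k)) A
     = (2 - A\<^sup>2) * (X (Suc (Suc k)) A + Y (Suc k) A) - (X (Suc k) A + Y k A)"
  by (simp add: X_Suc Y_Suc algebra_simps power2_eq_square)

lemma X_plus_Y_even: "X k (- A) + Y k (- A) = X k A + Y k A"
proof (induction k rule: induct_nat_012)
  case 0
  show ?case by (simp add: X_0 Y_0)
next
  case 1
  show ?case by (simp add: X_Suc Y_Suc X_0 Y_0 algebra_simps)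
next
  case (ge2 k)
  then show ?case by (simp only: X_plus_Y_recurrence) simp
qed

fun Q :: "nat \<Rightarrow> real poly" where
  "Q 0 = 1"
| "Q (Suc 0) = [:2, 0, -1:]"
| "Q (Suc (Suc k)) = [:2, 0, -1:] * Q (Suc k) - Q k"

lemma poly_Q_even: "poly (Q k) (- A) = poly (Q k) A"
  by (induction k rule: Q.induct) simp_all

lemma X_Suc_plus_Y_eq_poly_Q: "X (Suc k) A + Y k A = (2 - A) * poly (Q k) A"
proof (induction k rule: Q.induct)
  case 1
  show ?case by (simp add: X_Suc X_0 Y_0)
next
  case 2
  show ?case by (simp add: X_Suc Y_Suc X_0 Y_0 algebra_simps)
next
  case (3 k)
  then show ?case
    by (simp only: X_Suc_plus_Y_recurrence) (simp add: algebra_simps power2_eq_square)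
qed

theorem corollary4p9:
  fixes n :: nat
  assumes "n \<ge> 1"
  shows "(\<exists>q :: real poly. (\<forall>A. p (2 * n) A = (2 - A) * poly q A)
                          \<and> (\<forall>A. poly q (- A) = poly q A))
         \<and> (\<forall>A. p (2 * n + 1) (- A) = p (2 * n + 1) A)"
proof -
  obtain m where n: "n = Suc m" using assms by (cases n) auto
  have "p (2 * n) A = (2 - A) * poly (Q m) A" for A
    using p_odd_and_even[of m A] X_Suc_plus_Y_eq_poly_Q[of m A] n by simp
  moreover have "p (2 * n + 1) (- A) = p (2 * n + 1) A" for A
    using p_odd_and_even[of n] X_plus_Y_even[of n A] by simp
  ultimately show ?thesis using poly_Q_even by blast
qed

end
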